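(* Let $G_1=(T_1,A_1)$ and $G_2=(T_2,A_2)$ be games such that $T_1,T_2,A_1,A_2$ are at most countable, and suppose $G_2$ is injective in $\mathbf{Games}_{emb}$ with respect to embeddings between finite games. If $G=(T,A)\le G_1$ is a finite game and $f\colon G\to G_2$ is a game embedding, then there is a game embedding $\tilde f\colon G_1\to G_2$ with $\tilde f|_T=f$.
   Context: A game tree is $T\subseteq M^{<\omega}$ (some set $M$) closed under initial segments such that every $t\in T$ has an extension $t^\frown x\in T$; $|t|$ is the length and $t\restriction k$ the initial segment of length $k$. $\mathrm{Run}(T)=\{R\in M^\omega:R\restriction n\in T\ \forall n\}$. A game is $(T,A)$ with $A\subseteq\mathrm{Run}(T)$; it is finite if $\mathrm{Run}(T)$ is finite. For games, $(T,A)\le(T',A')$ means $T\subseteq T'$ and $A=A'\cap\mathrm{Run}(T)$. A chronological map $f\colon T_1\to T_2$ satisfies $|f(t)|=|t|$, $f(t\restriction k)=f(t)\restriction k$, and induces $\bar f$ on runs by $\bar f(R)\restriction n=f(R\restriction n)$. A game embedding $(T_1,A_1)\to(T_2,A_2)$ is an injective chronological $f$ with $\bar f(R)\in A_2\iff R\in A_1$ for all $R\in\mathrm{Run}(T_1)$. $\mathbf{Games}_{emb}$ is the category of games with game embeddings. A game $X$ is injective in $\mathbf{Games}_{emb}$ with respect to embeddings between finite games if for all finite games $C,D$, every game embedding $g\colon C\to D$ and every game embedding $f\colon C\to X$ there is a game embedding $h\colon D\to X$ with $h\circ g=f$. *)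

theory Defs
  imports Main "HOL-Library.Countable_Set"
begin

definition game_tree :: "'a list set \<Rightarrow> bool" where
  "game_tree T \<longleftrightarrow> (\<forall>t\<in>T. \<forall>k. take k t \<in> T) \<and> (\<forall>t\<in>T. \<exists>x. t @ [x] \<in> T)"

definition runs :: "'a list set \<Rightarrow> (nat \<Rightarrow> 'a) set" where
  "runs T = {R. \<forall>n. map R [0..<n] \<in> T}"

definition game :: "'a list set \<Rightarrow> (nat \<Rightarrow> 'a) set \<Rightarrow> bool" where
  "game T A \<longleftrightarrow> game_tree T \<and> A \<subseteq> runs T"

definition finite_game :: "'a list set \<Rightarrow> (nat \<Rightarrow> 'a) set \<Rightarrow> bool" where
  "finite_game T A \<longleftrightarrow> game T A \<and> finite (runs T)"

definition subgame :: "'a list set \<Rightarrow> (nat \<Rightarrow> 'a) set \<Rightarrow> 'a list set \<Rightarrow> (nat \<Rightarrow> 'a) set \<Rightarrow> bool" where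
  "subgame T A T' A' \<longleftrightarrow> T \<subseteq> T' \<and> A = A' \<inter> runs T"

text \<open>Chronological maps T1 \<rightarrow> T2 (only the values on T1 matter).\<close>
definition chronological :: "('a list \<Rightarrow> 'b list) \<Rightarrow> 'a list set \<Rightarrow> 'b list set \<Rightarrow> bool" where
  "chronological f T1 T2 \<longleftrightarrow> f ` T1 \<subseteq> T2 \<and>
     (\<forall>t\<in>T1. length (f t) = length t \<and> (\<forall>k. f (take k t) = take k (f t)))"

text \<open>Induced map on runs: (fbar f R) restricted to n equals f (R restricted to n).\<close>
definition fbar :: "('a list \<Rightarrow> 'b list) \<Rightarrow> (nat \<Rightarrow> 'a) \<Rightarrow> (nat \<Rightarrow> 'b)" where
  "fbar f R = (\<lambda>n. f (map R [0..<Suc n]) ! n)"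

definition game_emb :: "('a list \<Rightarrow> 'b list) \<Rightarrow> 'a list set \<Rightarrow> (nat \<Rightarrow> 'a) set
    \<Rightarrow> 'b list set \<Rightarrow> (nat \<Rightarrow> 'b) set \<Rightarrow> bool" where
  "game_emb f T1 A1 T2 A2 \<longleftrightarrow> chronological f T1 T2 \<and> inj_on f T1 \<and>
     (\<forall>R\<in>runs T1. fbar f R \<in> A2 \<longleftrightarrow> R \<in> A1)"

text \<open>Injectivity w.r.t. embeddings between finite games, where the finite games
  C, D range over games with moves of type nat (every finite game is
  isomorphic to one with moves in nat, so this loses no generality).\<close>
definition injective_fin :: "'b list set \<Rightarrow> (nat \<Rightarrow> 'b) set \<Rightarrow> bool" where
  "injective_fin TX AX \<longleftrightarrow>
     (\<forall>(TC::nat list set) AC (TD::nat list set) AD g f.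
        finite_game TC AC \<and> finite_game TD AD \<and>
        game_emb g TC AC TD AD \<and> game_emb f TC AC TX AX \<longrightarrow>
        (\<exists>h. game_emb h TD AD TX AX \<and> (\<forall>t\<in>TC. h (g t) = f t)))"

end

(* Enumerate runs rho_0, rho_1, ... of T1 that together pass through every node of T1 and
   include every run of A1, and enumerate A2 as a_0, a_1, ....  Starting from f on T, extend the
   embedding to the finite subgames C_(n+1) = C_n + (prefixes of rho_n), each time by injectivity
   of G2.  The union F of these embeddings is chronological and injective on T1 and classifies
   correctly every run lying in some C_n, in particular every run of A1.  Any other run R of T1
   is not in A1, and its image avoids A2: the node by which R first leaves C_(k+1) is added at a
   later stage n, where its image was chosen not to be a prefix of a_0, ..., a_(n-1), so the
   image of R differs from a_k.  That choice is possible because, once the moves of T1 are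
   relabelled by even numbers, one may add N+1 branches leaving C_n at the same node through
   distinct odd moves; an injective extension separates them, so one of them avoids N given
   prefixes, and rho_n is redirected onto it. *)

theory Submission
  imports Defs
begin

section \<open>Prefixes of runs and game trees\<close>

definition run_take :: "(nat \<Rightarrow> 'a) \<Rightarrow> nat \<Rightarrow> 'a list" where
  "run_take R n = map R [0..<n]"

definition run_tree :: "(nat \<Rightarrow> 'a) \<Rightarrow> 'a list set" where
  "run_tree R = range (run_take R)"

definition moves :: "'a list set \<Rightarrow> 'a set" where
  "moves T = (\<Union>t\<in>T. set t)"

lemma length_run_take [simp]: "length (run_take R n) = n"
  by (simp add: run_take_def)

lemma take_run_take [simp]: "take k (run_take R n) = run_take R (min k n)"
  by (simp add: run_take_def take_map min_def)

lemma nth_run_take [simp]: "i < n \<Longrightarrow> run_take R n ! i = R i"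
  by (simp add: run_take_def)

lemma run_take_0 [simp]: "run_take R 0 = []"
  by (simp add: run_take_def)

lemma run_take_Suc: "run_take R (Suc n) = run_take R n @ [R n]"
  by (simp add: run_take_def)

lemma run_take_eq_iff: "run_take R n = run_take S n \<longleftrightarrow> (\<forall>i<n. R i = S i)"
  by (auto simp: run_take_def)

lemma run_take_comp: "run_take (e \<circ> R) n = map e (run_take R n)"
  by (simp add: run_take_def)

lemma set_run_take: "set (run_take R n) = R ` {..<n}"
  by (auto simp: run_take_def)

lemma runs_iff: "R \<in> runs T \<longleftrightarrow> (\<forall>n. run_take R n \<in> T)"
  by (simp add: runs_def run_take_def)

lemma run_tree_iff: "t \<in> run_tree R \<longleftrightarrow> t = run_take R (length t)"
  by (auto simp: run_tree_def)

lemma runs_empty [simp]: "runs {} = {}"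
  by (auto simp: runs_iff)

lemma runs_mono: "X \<subseteq> Y \<Longrightarrow> runs X \<subseteq> runs Y"
  unfolding subset_iff runs_iff by blast

lemma run_tree_subset_iff: "run_tree R \<subseteq> T \<longleftrightarrow> R \<in> runs T"
  by (auto simp: run_tree_def runs_iff)

lemma runs_moves:
  assumes "R \<in> runs T"
  shows "R i \<in> moves T"
proof -
  have "run_take R (Suc i) \<in> T" using assms by (simp add: runs_iff)
  moreover have "R i \<in> set (run_take R (Suc i))" by (simp add: set_run_take)
  ultimately show ?thesis by (auto simp: moves_def)
qed

lemma moves_mono: "X \<subseteq> Y \<Longrightarrow> moves X \<subseteq> moves Y"
  by (auto simp: moves_def)

lemma set_subset_moves: "t \<in> T \<Longrightarrow> set t \<subseteq> moves T"
  by (auto simp: moves_def)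

lemma countable_moves: "countable T \<Longrightarrow> countable (moves T)"
  unfolding moves_def by (intro countable_UN) (auto intro: countable_finite)

lemma game_tree_take: "game_tree T \<Longrightarrow> t \<in> T \<Longrightarrow> take k t \<in> T"
  by (simp add: game_tree_def)

lemma game_tree_run_take_le:
  "game_tree T \<Longrightarrow> run_take R n \<in> T \<Longrightarrow> k \<le> n \<Longrightarrow> run_take R k \<in> T"
  using game_tree_take[of T "run_take R n" k] by (simp add: min_absorb1)

lemma game_tree_UN:
  assumes "\<And>i. i \<in> I \<Longrightarrow> game_tree (X i)"
  shows "game_tree (\<Union>i\<in>I. X i)"
  unfolding game_tree_def
proof (intro conjI ballI allI)
  fix t k assume "t \<in> (\<Union>i\<in>I. X i)"
  then obtain i where "i \<in> I" "t \<in> X i" by blast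
  then show "take k t \<in> (\<Union>i\<in>I. X i)" using assms game_tree_take by blast
next
  fix t assume "t \<in> (\<Union>i\<in>I. X i)"
  then obtain i where i: "i \<in> I" "t \<in> X i" by blast
  then obtain x where "t @ [x] \<in> X i" using assms unfolding game_tree_def by blast
  then show "\<exists>x. t @ [x] \<in> (\<Union>i\<in>I. X i)" using i by blast
qed

lemma game_tree_Un:
  assumes "game_tree X" "game_tree Y"
  shows "game_tree (X \<union> Y)"
  using game_tree_UN[of "{X, Y}" id] assms by auto

lemma game_tree_run_tree: "game_tree (run_tree R)"
  unfolding game_tree_def
proof (intro conjI ballI allI)
  fix t k assume "t \<in> run_tree R"
  then show "take k t \<in> run_tree R" by (auto simp: run_tree_def)
next
  fix t assume "t \<in> run_tree R"
  then have "t @ [R (length t)] = run_take R (Suc (length t))"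
    by (simp add: run_tree_iff run_take_Suc)
  then show "\<exists>x. t @ [x] \<in> run_tree R" by (auto simp: run_tree_def)
qed

lemma runs_run_tree [simp]: "runs (run_tree R) = {R}"
proof -
  have "S = R" if "S \<in> runs (run_tree R)" for S
  proof
    fix i
    have "run_take S (Suc i) \<in> run_tree R" using that by (simp add: runs_iff)
    then have "run_take S (Suc i) = run_take R (Suc i)" by (simp add: run_tree_iff)
    then show "S i = R i" by (simp add: run_take_eq_iff)
  qed
  then show ?thesis by (auto simp: runs_iff run_tree_def)
qed

lemma runs_Un:
  assumes "game_tree X" "game_tree Y"
  shows "runs (X \<union> Y) = runs X \<union> runs Y"
proof -
  have "R \<in> runs X \<or> R \<in> runs Y" if "R \<in> runs (X \<union> Y)" for R
  proof (rule ccontr)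
    assume "\<not> ?thesis"
    then obtain a b where "run_take R a \<notin> X" "run_take R b \<notin> Y" by (auto simp: runs_iff)
    moreover have "run_take R (max a b) \<in> X \<union> Y" using that by (simp add: runs_iff)
    ultimately show False
      using game_tree_run_take_le[OF assms(1), of R "max a b" a]
        game_tree_run_take_le[OF assms(2), of R "max a b" b] by auto
  qed
  then show ?thesis using runs_mono[of X "X \<union> Y"] runs_mono[of Y "X \<union> Y"] by blast
qed

lemma runs_Un_run_trees:
  assumes "game_tree C" "finite S"
  shows "runs (C \<union> (\<Union>R\<in>S. run_tree R)) = runs C \<union> S"
  using assms(2)
proof (induction S rule: finite_induct)
  case (insert R S)
  let ?C = "C \<union> (\<Union>R'\<in>S. run_tree R')"
  have "game_tree ?C" using assms(1) by (intro game_tree_Un game_tree_UN game_tree_run_tree)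
  moreover have "C \<union> (\<Union>R'\<in>insert R S. run_tree R') = ?C \<union> run_tree R" by blast
  ultimately have "runs (C \<union> (\<Union>R'\<in>insert R S. run_tree R')) = runs ?C \<union> {R}"
    using runs_Un game_tree_run_tree by (metis runs_run_tree)
  then show ?case using insert.IH by auto
qed simp

lemma finite_game_add_runs:
  assumes "finite_game C AC" "finite S" "AS \<subseteq> S"
  shows "finite_game (C \<union> (\<Union>R\<in>S. run_tree R)) (AC \<union> AS)"
proof -
  have C: "game_tree C" "AC \<subseteq> runs C" "finite (runs C)"
    using assms(1) by (auto simp: finite_game_def game_def)
  have "game_tree (C \<union> (\<Union>R\<in>S. run_tree R))"
    using C(1) by (intro game_tree_Un game_tree_UN game_tree_run_tree)
  moreover have "runs (C \<union> (\<Union>R\<in>S. run_tree R)) = runs C \<union> S"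
    using runs_Un_run_trees[OF C(1) assms(2)] .
  ultimately show ?thesis
    using C(2,3) assms(2,3) by (auto simp: finite_game_def game_def)
qed

lemma finite_game_add_run:
  assumes "finite_game C (A \<inter> runs C)"
  shows "finite_game (C \<union> run_tree R) (A \<inter> runs (C \<union> run_tree R))"
proof -
  have "game_tree C" using assms by (simp add: finite_game_def game_def)
  then have "runs (C \<union> run_tree R) = runs C \<union> {R}"
    using runs_Un[OF _ game_tree_run_tree] by simp
  then have "A \<inter> runs (C \<union> run_tree R) = A \<inter> runs C \<union> A \<inter> {R}" by auto
  then show ?thesis using finite_game_add_runs[OF assms, of "{R}" "A \<inter> {R}"] by simp
qed

lemma game_tree_run_through:
  assumes "game_tree T" "t \<in> T"
  shows "\<exists>R\<in>runs T. t \<in> run_tree R"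
proof -
  obtain nx where nx: "\<And>s. s \<in> T \<Longrightarrow> s @ [nx s] \<in> T"
    using assms(1) unfolding game_tree_def by metis
  define s where "s n = ((\<lambda>s. s @ [nx s]) ^^ n) t" for n
  have s_Suc: "s (Suc n) = s n @ [nx (s n)]" for n by (simp add: s_def)
  have s_in_T: "s n \<in> T" for n
    by (induction n) (simp_all add: s_def assms(2) nx)
  define R where "R i = (if i < length t then t ! i else nx (s (i - length t)))" for i
  have R_s: "run_take R (length t + n) = s n" for n
  proof (induction n)
    case 0
    have "run_take R (length t) = t" by (rule nth_equalityI) (simp_all add: R_def)
    then show ?case by (simp add: s_def)
  next
    case (Suc n)
    have "R (length t + n) = nx (s n)" by (simp add: R_def)
    then show ?case by (simp add: s_Suc run_take_Suc Suc.IH)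
  qed
  have "run_take R n \<in> T" for n
    using game_tree_run_take_le[OF assms(1), of R "length t + n" n] R_s s_in_T by simp
  moreover have "t \<in> run_tree R" using R_s[of 0] by (simp add: run_tree_iff s_def)
  ultimately show ?thesis by (auto simp: runs_iff)
qed

lemma countable_game_run_cover:
  assumes "game T A" "countable T" "countable A" "T \<noteq> {}"
  shows "\<exists>\<rho> :: nat \<Rightarrow> nat \<Rightarrow> 'a. range \<rho> \<subseteq> runs T \<and> A \<subseteq> range \<rho> \<and> T \<subseteq> (\<Union>n. run_tree (\<rho> n))"
proof -
  have gt: "game_tree T" and AT: "A \<subseteq> runs T" using assms(1) by (simp_all add: game_def)
  obtain r where r: "\<And>t. t \<in> T \<Longrightarrow> r t \<in> runs T \<and> t \<in> run_tree (r t)"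
    using game_tree_run_through[OF gt] by metis
  define Q where "Q = A \<union> r ` T"
  have "Q \<noteq> {}" using assms(4) by (simp add: Q_def)
  moreover have "countable Q" using assms(2,3) by (simp add: Q_def)
  ultimately have Q: "range (from_nat_into Q) = Q" by simp
  have "Q \<subseteq> runs T" using AT r by (auto simp: Q_def)
  then have "range (from_nat_into Q) \<subseteq> runs T" using Q by blast
  moreover have "A \<subseteq> range (from_nat_into Q)" using Q by (simp add: Q_def)
  moreover have "T \<subseteq> (\<Union>n. run_tree (from_nat_into Q n))"
  proof
    fix t assume t: "t \<in> T"
    then have "r t \<in> range (from_nat_into Q)" using Q by (simp add: Q_def)
    then show "t \<in> (\<Union>n. run_tree (from_nat_into Q n))" using r[OF t] by auto
  qed
  ultimately show ?thesis by blast
qed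

section \<open>Induced maps on runs and game embeddings\<close>

lemma run_take_fbar:
  assumes "chronological g X Y" "R \<in> runs X"
  shows "run_take (fbar g R) n = g (run_take R n)"
proof (rule nth_equalityI)
  have X: "run_take R k \<in> X" for k using assms(2) by (simp add: runs_iff)
  then have len: "length (g (run_take R k)) = k" for k
    using assms(1) by (simp add: chronological_def)
  then show "length (run_take (fbar g R) n) = length (g (run_take R n))" by simp
  fix i assume "i < length (run_take (fbar g R) n)"
  then have i: "i < n" by simp
  have "g (run_take R (Suc i)) = take (Suc i) (g (run_take R n))"
    using assms(1) X[of n] i unfolding chronological_def by (metis Suc_leI min_absorb1 take_run_take)
  then have "g (run_take R (Suc i)) ! i = g (run_take R n) ! i" using i by simp
  then show "run_take (fbar g R) n ! i = g (run_take R n) ! i"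
    using i by (simp add: fbar_def run_take_def)
qed

lemma fbar_in_runs: "chronological g X Y \<Longrightarrow> R \<in> runs X \<Longrightarrow> fbar g R \<in> runs Y"
  using run_take_fbar[of g X Y R] by (auto simp: runs_iff chronological_def)

lemma fbar_nth: "fbar g R n = g (run_take R (Suc n)) ! n"
  by (simp add: fbar_def run_take_def)

lemma fbar_eqI:
  assumes "\<And>n. g (run_take R n) = run_take S n"
  shows "fbar g R = S"
proof
  fix n show "fbar g R n = S n" using assms[of "Suc n"] by (simp add: fbar_nth)
qed

lemma fbar_cong:
  assumes "\<And>n. g (run_take R n) = g' (run_take R n)"
  shows "fbar g R = fbar g' R"
proof
  fix n show "fbar g R n = fbar g' R n" using assms[of "Suc n"] by (simp add: fbar_nth)
qed

lemma fbar_map: "fbar (map e) R = e \<circ> R"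
  by (rule fbar_eqI) (simp add: run_take_comp)

lemma game_emb_comp:
  assumes g: "game_emb g X AX Y AY" and h: "game_emb h Y AY Z AZ"
  shows "game_emb (h \<circ> g) X AX Z AZ"
proof -
  have cg: "chronological g X Y" and ch: "chronological h Y Z"
    using g h by (simp_all add: game_emb_def)
  have "chronological (h \<circ> g) X Z"
    using cg ch unfolding chronological_def by (auto simp: image_subset_iff)
  moreover have "inj_on (h \<circ> g) X"
    using g h cg comp_inj_on[OF _ inj_on_subset[of h Y "g ` X"]]
    by (simp add: game_emb_def chronological_def)
  moreover have "fbar (h \<circ> g) R \<in> AZ \<longleftrightarrow> R \<in> AX" if R: "R \<in> runs X" for R
  proof -
    have gR: "fbar g R \<in> runs Y" using fbar_in_runs[OF cg R] .
    have "fbar (h \<circ> g) R = fbar h (fbar g R)"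
      by (rule fbar_eqI) (simp add: run_take_fbar[OF cg R] run_take_fbar[OF ch gR])
    then show ?thesis using g h R gR by (simp add: game_emb_def)
  qed
  ultimately show ?thesis by (simp add: game_emb_def)
qed

lemma game_emb_cong:
  assumes "game_emb g X AX Y AY" "game_tree X" "\<And>t. t \<in> X \<Longrightarrow> g' t = g t"
  shows "game_emb g' X AX Y AY"
proof -
  have "chronological g' X Y"
    using assms unfolding game_emb_def chronological_def by (auto simp: game_tree_take)
  moreover have "inj_on g' X \<longleftrightarrow> inj_on g X" by (rule inj_on_cong) (rule assms(3))
  moreover have "fbar g' R = fbar g R" if "R \<in> runs X" for R
    using that assms(3) by (intro fbar_cong) (simp add: runs_iff)
  ultimately show ?thesis using assms(1) by (simp add: game_emb_def)
qed

lemma game_emb_id: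
  assumes "subgame C AC D AD"
  shows "game_emb id C AC D AD"
proof -
  have "C \<subseteq> D" "AC = AD \<inter> runs C" using assms by (simp_all add: subgame_def)
  moreover have fbar_id: "fbar id R = R" for R by (rule fbar_eqI) simp
  ultimately show ?thesis by (auto simp: game_emb_def chronological_def fbar_id)
qed

lemma game_emb_inv_into:
  assumes g: "game_emb g X AX Y AY" and X: "game_tree X" and Y: "g ` X = Y"
  shows "game_emb (inv_into X g) Y AY X AX"
proof -
  have cg: "chronological g X Y" and inj: "inj_on g X" using g by (simp_all add: game_emb_def)
  have ci: "chronological (inv_into X g) Y X"
    unfolding chronological_def
  proof (intro conjI ballI allI)
    show "inv_into X g ` Y \<subseteq> X" using Y by (auto intro: inv_into_into)
  next
    fix y assume "y \<in> Y"
    then obtain x where x: "x \<in> X" "y = g x" using Y by blast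
    then show "length (inv_into X g y) = length y" using cg inj by (simp add: chronological_def)
    fix k
    have "take k y = g (take k x)" using cg x by (simp add: chronological_def)
    then show "inv_into X g (take k y) = take k (inv_into X g y)"
      using inj x X by (simp add: game_tree_take)
  qed
  moreover have "inj_on (inv_into X g) Y" using inj_on_inv_into[of Y g X] Y by simp
  moreover have "fbar (inv_into X g) R' \<in> AX \<longleftrightarrow> R' \<in> AY" if R': "R' \<in> runs Y" for R'
  proof -
    define R where "R = fbar (inv_into X g) R'"
    have "run_take R n = inv_into X g (run_take R' n)" for n
      using run_take_fbar[OF ci R'] by (simp add: R_def)
    moreover have "run_take R' n \<in> g ` X" for n using R' Y by (simp add: runs_iff)
    ultimately have "run_take R n \<in> X" "g (run_take R n) = run_take R' n" for n
      by (simp_all add: inv_into_into f_inv_into_f)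
    then have "R \<in> runs X" "fbar g R = R'" by (simp_all add: runs_iff fbar_eqI)
    then have "R' \<in> AY \<longleftrightarrow> R \<in> AX" using g unfolding game_emb_def by blast
    then show ?thesis by (simp add: R_def)
  qed
  ultimately show ?thesis by (simp add: game_emb_def)
qed

lemma injective_fin_extend:
  fixes C D :: "nat list set"
  assumes "injective_fin T2 A2" "finite_game C AC" "finite_game D AD" "subgame C AC D AD"
    and "game_emb g C AC T2 A2"
  shows "\<exists>h. game_emb h D AD T2 A2 \<and> (\<forall>t\<in>C. h t = g t)"
  using assms(1)[unfolded injective_fin_def, rule_format, of C AC D AD id g]
    assms(2,3,5) game_emb_id[OF assms(4)] by simp

section \<open>Relabelling moves\<close>

lemma inj_on_comp_runs:
  assumes "inj_on e (moves X)"
  shows "inj_on ((\<circ>) e) (runs X)"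
proof (rule inj_onI)
  fix R S assume R: "R \<in> runs X" and S: "S \<in> runs X" and eq: "e \<circ> R = e \<circ> S"
  show "R = S"
  proof
    fix i
    have "e (R i) = e (S i)" using eq by (metis comp_apply)
    then show "R i = S i" using inj_onD[OF assms _ runs_moves[OF R] runs_moves[OF S]] by blast
  qed
qed

lemma runs_image_map:
  assumes inj: "inj_on e (moves X)"
  shows "runs (map e ` X) = (\<circ>) e ` runs X"
proof
  show "(\<circ>) e ` runs X \<subseteq> runs (map e ` X)" by (auto simp: runs_iff run_take_comp)
next
  show "runs (map e ` X) \<subseteq> (\<circ>) e ` runs X"
  proof
    fix R' assume "R' \<in> runs (map e ` X)"
    then obtain t where t: "\<And>n. t n \<in> X" "\<And>n. run_take R' n = map e (t n)"
      unfolding runs_iff image_iff by metis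
    define R where "R = inv_into (moves X) e \<circ> R'"
    have "R' i \<in> e ` moves X" for i
    proof -
      have "R' i \<in> set (run_take R' (Suc i))" by (simp add: set_run_take)
      also have "\<dots> = e ` set (t (Suc i))" by (simp add: t(2))
      also have "\<dots> \<subseteq> e ` moves X" using set_subset_moves[OF t(1)] by (rule image_mono)
      finally show ?thesis .
    qed
    then have "e \<circ> R = R'" by (auto simp: R_def fun_eq_iff f_inv_into_f)
    moreover have "run_take R n = t n" for n
      using set_subset_moves[OF t(1)[of n]] inj
      by (auto simp: R_def run_take_comp t(2) intro!: map_idI inv_into_f_f)
    then have "R \<in> runs X" using t(1) by (simp add: runs_iff)
    ultimately show "R' \<in> (\<circ>) e ` runs X" by blast
  qed
qed

lemma game_tree_image_map:
  assumes "game_tree X"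
  shows "game_tree (map e ` X)"
  unfolding game_tree_def
proof (intro conjI ballI allI)
  fix t k assume "t \<in> map e ` X"
  then obtain u where "u \<in> X" "t = map e u" by blast
  then have "take k t = map e (take k u)" "take k u \<in> X"
    using assms by (simp_all add: take_map game_tree_take)
  then show "take k t \<in> map e ` X" by blast
next
  fix t assume "t \<in> map e ` X"
  then obtain u where u: "u \<in> X" "t = map e u" by blast
  then obtain x where "u @ [x] \<in> X" using assms unfolding game_tree_def by blast
  then have "map e (u @ [x]) \<in> map e ` X" by blast
  then have "t @ [e x] \<in> map e ` X" using u by simp
  then show "\<exists>x. t @ [x] \<in> map e ` X" by blast
qed

lemma game_emb_map:
  assumes inj: "inj_on e (moves X)" and AX: "AX \<subseteq> runs X"
  shows "game_emb (map e) X AX (map e ` X) ((\<circ>) e ` AX)"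
proof -
  have "chronological (map e) X (map e ` X)" by (simp add: chronological_def take_map)
  moreover have "inj_on (map e) X" using inj by (simp add: moves_def inj_on_mapI)
  moreover have "e \<circ> R \<in> (\<circ>) e ` AX \<longleftrightarrow> R \<in> AX" if "R \<in> runs X" for R
    using inj_on_image_mem_iff[OF inj_on_comp_runs[OF inj] that AX] .
  ultimately show ?thesis by (simp add: game_emb_def fbar_map)
qed

lemma subgame_image_map:
  assumes inj: "inj_on e (moves T1)" and "game T1 A1" "finite_game T A" "subgame T A T1 A1"
  shows "game (map e ` T1) ((\<circ>) e ` A1)" and "finite_game (map e ` T) ((\<circ>) e ` A)"
    and "subgame (map e ` T) ((\<circ>) e ` A) (map e ` T1) ((\<circ>) e ` A1)"
proof -
  have T1: "game_tree T1" "A1 \<subseteq> runs T1" and T: "game_tree T" "finite (runs T)"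
    and sub: "T \<subseteq> T1" "A = A1 \<inter> runs T"
    using assms(2-4) by (auto simp: game_def finite_game_def subgame_def)
  have injT: "inj_on e (moves T)" using inj moves_mono[OF sub(1)] by (rule inj_on_subset)
  show "game (map e ` T1) ((\<circ>) e ` A1)"
    using T1 runs_image_map[OF inj] by (auto simp: game_def game_tree_image_map)
  show "finite_game (map e ` T) ((\<circ>) e ` A)"
    using T sub(2) runs_image_map[OF injT] by (auto simp: finite_game_def game_def game_tree_image_map)
  have "(\<circ>) e ` A = (\<circ>) e ` A1 \<inter> (\<circ>) e ` runs T"
    unfolding sub(2) using inj_on_comp_runs[OF inj] T1(2) runs_mono[OF sub(1)]
    by (rule inj_on_image_Int)
  then show "subgame (map e ` T) ((\<circ>) e ` A) (map e ` T1) ((\<circ>) e ` A1)"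
    using sub(1) runs_image_map[OF injT] by (auto simp: subgame_def)
qed

section \<open>Extending an embedding along one run\<close>

definition leaves_after :: "'a list set \<Rightarrow> (nat \<Rightarrow> 'a) \<Rightarrow> nat \<Rightarrow> bool" where
  "leaves_after C \<rho> m \<longleftrightarrow> (\<forall>j. run_take \<rho> j \<in> C \<longleftrightarrow> j \<le> m)"

lemma leaves_afterI:
  assumes "game_tree C" "run_take \<rho> m \<in> C" "run_take \<rho> (Suc m) \<notin> C"
  shows "leaves_after C \<rho> m"
  unfolding leaves_after_def
  using game_tree_run_take_le[OF assms(1), of \<rho> _ "Suc m"] game_tree_run_take_le[OF assms(1,2)] assms(3)
  by (meson not_less_eq_eq)

lemma leaves_after_unique:
  "leaves_after C \<rho> m \<Longrightarrow> run_take \<rho> m' \<in> C \<Longrightarrow> run_take \<rho> (Suc m') \<notin> C \<Longrightarrow> m' = m"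
  by (simp add: leaves_after_def not_less_eq_eq)

lemma leaves_after_not_runs: "leaves_after C \<rho> m \<Longrightarrow> \<rho> \<notin> runs C"
  unfolding leaves_after_def runs_iff by (metis Suc_n_not_le_n)

definition redirect :: "'a list set \<Rightarrow> (nat \<Rightarrow> 'a) \<Rightarrow> 'a list \<Rightarrow> 'a list" where
  "redirect C \<sigma> t = (if t \<in> C then t else run_take \<sigma> (length t))"

lemma redirect_run_take:
  assumes "leaves_after C \<rho> m" "run_take \<sigma> m = run_take \<rho> m"
  shows "redirect C \<sigma> (run_take \<rho> j) = run_take \<sigma> j"
proof (cases "j \<le> m")
  case True
  then have "run_take \<sigma> j = run_take \<rho> j"
    using arg_cong[OF assms(2), of "take j"] by (simp add: min_absorb1)
  then show ?thesis using assms(1) True by (simp add: redirect_def leaves_after_def)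
qed (use assms(1) in \<open>simp add: redirect_def leaves_after_def\<close>)

lemma chronological_redirect:
  assumes C: "game_tree C" and \<rho>: "leaves_after C \<rho> m" and agree: "run_take \<sigma> m = run_take \<rho> m"
    and D: "C \<union> run_tree \<sigma> \<subseteq> D"
  shows "chronological (redirect C \<sigma>) (C \<union> run_tree \<rho>) D"
proof -
  have "redirect C \<sigma> t \<in> D \<and> length (redirect C \<sigma> t) = length t \<and>
      (\<forall>k. redirect C \<sigma> (take k t) = take k (redirect C \<sigma> t))"
    if "t \<in> C \<union> run_tree \<rho>" for t
  proof (cases "t \<in> C")
    case True
    then show ?thesis using D game_tree_take[OF C True] by (auto simp: redirect_def)
  next
    case False
    define j where "j = length t"
    have t: "t = run_take \<rho> j" using that False by (simp add: run_tree_iff j_def)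
    have "run_take \<sigma> j \<in> D" using D by (auto simp: run_tree_def)
    then show ?thesis by (simp add: t redirect_run_take[OF \<rho> agree])
  qed
  then show ?thesis by (auto simp: chronological_def)
qed

lemma inj_on_redirect:
  assumes \<rho>: "leaves_after C \<rho> m" and \<sigma>: "leaves_after C \<sigma> m" and agree: "run_take \<sigma> m = run_take \<rho> m"
  shows "inj_on (redirect C \<sigma>) (C \<union> run_tree \<rho>)"
proof (rule inj_on_inverseI)
  fix t assume t: "t \<in> C \<union> run_tree \<rho>"
  show "redirect C \<rho> (redirect C \<sigma> t) = t"
  proof (cases "t \<in> C")
    case False
    define j where "j = length t"
    have j: "t = run_take \<rho> j" using t False by (simp add: run_tree_iff j_def)
    then have "redirect C \<sigma> t = run_take \<sigma> j" by (simp add: redirect_run_take[OF \<rho> agree])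
    moreover have "redirect C \<rho> (run_take \<sigma> j) = run_take \<rho> j"
      using redirect_run_take[OF \<sigma> agree[symmetric]] .
    ultimately show ?thesis by (simp add: j)
  qed (simp add: redirect_def)
qed

lemma game_emb_redirect:
  assumes C: "game_tree C" and \<rho>: "leaves_after C \<rho> m" and \<sigma>: "leaves_after C \<sigma> m"
    and agree: "run_take \<sigma> m = run_take \<rho> m" and D: "C \<union> run_tree \<sigma> \<subseteq> D"
    and AD_C: "AD \<inter> runs C = A \<inter> runs C" and AD_\<sigma>: "\<sigma> \<in> AD \<longleftrightarrow> \<rho> \<in> A"
  shows "game_emb (redirect C \<sigma>) (C \<union> run_tree \<rho>) A D AD"
proof -
  have "fbar (redirect C \<sigma>) R \<in> AD \<longleftrightarrow> R \<in> A" if "R \<in> runs (C \<union> run_tree \<rho>)" for R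
  proof (cases "R \<in> runs C")
    case True
    then have "fbar (redirect C \<sigma>) R = R" by (intro fbar_eqI) (simp add: runs_iff redirect_def)
    moreover have "R \<in> AD \<longleftrightarrow> R \<in> A" using AD_C True by (metis Int_iff)
    ultimately show ?thesis by simp
  next
    case False
    then have "R = \<rho>" using that runs_Un[OF C game_tree_run_tree] by simp
    moreover have "fbar (redirect C \<sigma>) \<rho> = \<sigma>" by (intro fbar_eqI redirect_run_take[OF \<rho> agree])
    ultimately show ?thesis using AD_\<sigma> by simp
  qed
  then show ?thesis
    using chronological_redirect[OF C \<rho> agree D] inj_on_redirect[OF \<rho> \<sigma> agree]
    by (simp add: game_emb_def)
qed

definition odd_branch :: "(nat \<Rightarrow> nat) \<Rightarrow> nat \<Rightarrow> nat \<Rightarrow> nat \<Rightarrow> nat" where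
  "odd_branch \<rho> m i = \<rho>(m := 2 * i + 1)"

lemma run_take_odd_branch: "j \<le> m \<Longrightarrow> run_take (odd_branch \<rho> m i) j = run_take \<rho> j"
  by (simp add: odd_branch_def run_take_eq_iff)

lemma inj_odd_branch: "inj (\<lambda>i. run_take (odd_branch \<rho> m i) (Suc m))"
proof (rule injI)
  fix x y assume "run_take (odd_branch \<rho> m x) (Suc m) = run_take (odd_branch \<rho> m y) (Suc m)"
  then have "odd_branch \<rho> m x m = odd_branch \<rho> m y m" by (simp add: run_take_eq_iff)
  then show "x = y" by (simp add: odd_branch_def)
qed

lemma leaves_after_odd_branch:
  fixes C :: "nat list set"
  assumes even: "\<forall>x\<in>moves C. even x" and \<rho>: "leaves_after C \<rho> m"
  shows "leaves_after C (odd_branch \<rho> m i) m"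
  unfolding leaves_after_def
proof (intro allI iffI)
  fix j assume "run_take (odd_branch \<rho> m i) j \<in> C"
  then have "\<forall>x\<in>set (run_take (odd_branch \<rho> m i) j). even x"
    using even set_subset_moves by blast
  show "j \<le> m"
  proof (rule ccontr)
    assume "\<not> j \<le> m"
    then have "odd_branch \<rho> m i m \<in> set (run_take (odd_branch \<rho> m i) j)"
      by (simp add: set_run_take)
    then show False using \<open>\<forall>x\<in>set _. even x\<close> by (auto simp: odd_branch_def)
  qed
next
  fix j assume "j \<le> m"
  then show "run_take (odd_branch \<rho> m i) j \<in> C" using \<rho> by (simp add: run_take_odd_branch leaves_after_def)
qed

lemma extend_to_odd_branches:
  fixes C :: "nat list set"
  assumes inj: "injective_fin T2 A2" and even: "\<forall>x\<in>moves C. even x"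
    and C: "finite_game C (A \<inter> runs C)" and g: "game_emb g C (A \<inter> runs C) T2 A2"
    and \<rho>: "leaves_after C \<rho> m"
  shows "\<exists>h. game_emb h (C \<union> (\<Union>R\<in>odd_branch \<rho> m ` {..N}. run_tree R))
      (A \<inter> runs C \<union> (if \<rho> \<in> A then odd_branch \<rho> m ` {..N} else {})) T2 A2 \<and> (\<forall>t\<in>C. h t = g t)"
proof (rule injective_fin_extend[OF inj C _ _ g])
  show "finite_game (C \<union> (\<Union>R\<in>odd_branch \<rho> m ` {..N}. run_tree R))
      (A \<inter> runs C \<union> (if \<rho> \<in> A then odd_branch \<rho> m ` {..N} else {}))"
    by (rule finite_game_add_runs[OF C]) auto
  have "odd_branch \<rho> m i \<notin> runs C" for i
    using leaves_after_not_runs[OF leaves_after_odd_branch[OF even \<rho>]] .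
  then show "subgame C (A \<inter> runs C) (C \<union> (\<Union>R\<in>odd_branch \<rho> m ` {..N}. run_tree R))
      (A \<inter> runs C \<union> (if \<rho> \<in> A then odd_branch \<rho> m ` {..N} else {}))"
    by (auto simp: subgame_def)
qed

lemma inj_on_atMost_escapes:
  assumes "inj_on c {..N}" "finite X" "card X \<le> N"
  shows "\<exists>i\<le>N. c i \<notin> X"
proof (rule ccontr)
  assume "\<not> ?thesis"
  then have "card {..N} \<le> card X" using card_inj_on_le[OF assms(1) _ assms(2)] by auto
  then show False using assms(3) by simp
qed

lemma extend_along_leaving_run:
  fixes C :: "nat list set" and \<rho> :: "nat \<Rightarrow> nat"
  assumes inj: "injective_fin T2 A2" and even: "\<forall>x\<in>moves C. even x"
    and C: "finite_game C (A \<inter> runs C)" and g: "game_emb g C (A \<inter> runs C) T2 A2"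
    and \<rho>: "leaves_after C \<rho> m" and B: "finite B"
  shows "\<exists>g'. game_emb g' (C \<union> run_tree \<rho>) (A \<inter> runs (C \<union> run_tree \<rho>)) T2 A2 \<and>
    (\<forall>t\<in>C. g' t = g t) \<and> g' (run_take \<rho> (Suc m)) \<notin> (\<lambda>S. run_take S (Suc m)) ` B"
proof -
  define N where "N = card B"
  define \<sigma> where "\<sigma> = odd_branch \<rho> m"
  \<comment> \<open>The images under h of the nodes by which the N + 1 branches \<open>\<sigma> i\<close> leave C are
    distinct, so one of them is not among the at most N forbidden prefixes.\<close>
  define D where "D = C \<union> (\<Union>R\<in>\<sigma> ` {..N}. run_tree R)"
  define AD where "AD = A \<inter> runs C \<union> (if \<rho> \<in> A then \<sigma> ` {..N} else {})"
  obtain h where h: "game_emb h D AD T2 A2" and h_C: "\<forall>t\<in>C. h t = g t"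
    using extend_to_odd_branches[OF inj even C g \<rho>] unfolding D_def AD_def \<sigma>_def by blast
  define c where "c i = run_take (\<sigma> i) (Suc m)" for i
  have "c ` {..N} \<subseteq> D" by (auto simp: c_def D_def run_tree_def)
  moreover have "inj_on h D" using h by (simp add: game_emb_def)
  ultimately have "inj_on (h \<circ> c) {..N}"
    using inj_odd_branch[of \<rho> m] unfolding c_def \<sigma>_def by (blast intro: comp_inj_on inj_on_subset)
  moreover have "card ((\<lambda>S. run_take S (Suc m)) ` B) \<le> N" unfolding N_def using B by (rule card_image_le)
  ultimately have "\<exists>i\<le>N. (h \<circ> c) i \<notin> (\<lambda>S. run_take S (Suc m)) ` B"
    by (rule inj_on_atMost_escapes[OF _ finite_imageI[OF B]])
  then obtain i where i: "i \<le> N" "h (c i) \<notin> (\<lambda>S. run_take S (Suc m)) ` B" by auto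
  have \<sigma>_i: "leaves_after C (\<sigma> i) m" "\<sigma> i \<notin> runs C"
    using leaves_after_odd_branch[OF even \<rho>] leaves_after_not_runs by (auto simp: \<sigma>_def)
  have "game_emb (redirect C (\<sigma> i)) (C \<union> run_tree \<rho>) (A \<inter> runs (C \<union> run_tree \<rho>)) D AD"
  proof (rule game_emb_redirect[OF _ \<rho> \<sigma>_i(1)])
    show "game_tree C" using C by (simp add: finite_game_def game_def)
    show "run_take (\<sigma> i) m = run_take \<rho> m" by (simp add: \<sigma>_def run_take_odd_branch)
    show "C \<union> run_tree (\<sigma> i) \<subseteq> D" using i by (auto simp: D_def)
    show "AD \<inter> runs C = A \<inter> runs (C \<union> run_tree \<rho>) \<inter> runs C"
      using leaves_after_not_runs[OF leaves_after_odd_branch[OF even \<rho>]] runs_mono[of C "C \<union> run_tree \<rho>"]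
      by (auto simp: AD_def \<sigma>_def)
    show "\<sigma> i \<in> AD \<longleftrightarrow> \<rho> \<in> A \<inter> runs (C \<union> run_tree \<rho>)"
      using \<sigma>_i(2) i runs_mono[of "run_tree \<rho>" "C \<union> run_tree \<rho>"] by (auto simp: AD_def)
  qed
  then have "game_emb (h \<circ> redirect C (\<sigma> i)) (C \<union> run_tree \<rho>) (A \<inter> runs (C \<union> run_tree \<rho>)) T2 A2"
    using h by (rule game_emb_comp)
  moreover have "\<forall>t\<in>C. (h \<circ> redirect C (\<sigma> i)) t = g t" using h_C by (simp add: redirect_def)
  moreover have "(h \<circ> redirect C (\<sigma> i)) (run_take \<rho> (Suc m)) = h (c i)"
    using \<rho> by (simp add: redirect_def leaves_after_def c_def)
  ultimately show ?thesis using i(2) by metis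
qed

lemma extend_along_run:
  fixes C :: "nat list set" and \<rho> :: "nat \<Rightarrow> nat"
  assumes inj: "injective_fin T2 A2" and even: "\<forall>x\<in>moves C. even x"
    and C: "finite_game C (A \<inter> runs C)" and g: "game_emb g C (A \<inter> runs C) T2 A2"
    and B: "finite B"
  shows "\<exists>g'. game_emb g' (C \<union> run_tree \<rho>) (A \<inter> runs (C \<union> run_tree \<rho>)) T2 A2 \<and>
    (\<forall>t\<in>C. g' t = g t) \<and>
    (\<forall>m. run_take \<rho> m \<in> C \<longrightarrow> run_take \<rho> (Suc m) \<notin> C \<longrightarrow>
       g' (run_take \<rho> (Suc m)) \<notin> (\<lambda>S. run_take S (Suc m)) ` B)"
proof (cases "\<exists>m. run_take \<rho> m \<in> C \<and> run_take \<rho> (Suc m) \<notin> C")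
  case True
  then obtain m where m: "run_take \<rho> m \<in> C" "run_take \<rho> (Suc m) \<notin> C" by blast
  have "game_tree C" using C by (simp add: finite_game_def game_def)
  then have \<rho>: "leaves_after C \<rho> m" using m by (rule leaves_afterI)
  then show ?thesis
    using extend_along_leaving_run[OF inj even C g \<rho> B] leaves_after_unique[OF \<rho>] by blast
next
  case False
  have "subgame C (A \<inter> runs C) (C \<union> run_tree \<rho>) (A \<inter> runs (C \<union> run_tree \<rho>))"
    using runs_mono[of C "C \<union> run_tree \<rho>"] by (auto simp: subgame_def)
  then obtain g' where "game_emb g' (C \<union> run_tree \<rho>) (A \<inter> runs (C \<union> run_tree \<rho>)) T2 A2"
    "\<forall>t\<in>C. g' t = g t"
    using injective_fin_extend[OF inj C finite_game_add_run[OF C] _ g] by blast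
  then show ?thesis using False by blast
qed

section \<open>Increasing chains of finite subgames\<close>

lemma mono_chain_entry:
  fixes C :: "nat \<Rightarrow> 'a set"
  assumes "mono C" "x \<notin> C k" "x \<in> C n"
  shows "\<exists>i\<ge>k. x \<in> C (Suc i) - C i"
  using assms(3)
proof (induction n)
  case 0
  then show ?case using assms(1,2) monoD[OF assms(1), of 0 k] by auto
next
  case (Suc n)
  show ?case
  proof (cases "x \<in> C n")
    case True
    then show ?thesis using Suc.IH by blast
  next
    case False
    have "k \<le> n"
    proof (rule ccontr)
      assume "\<not> k \<le> n"
      then have "C (Suc n) \<subseteq> C k" using assms(1) by (simp add: monoD)
      then show False using Suc.prems assms(2) by blast
    qed
    then show ?thesis using Suc.prems False by blast
  qed
qed

lemma mono_chain_first_exit: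
  fixes C :: "nat \<Rightarrow> 'a set"
  assumes "mono C" "u 0 \<in> C k" "u j \<notin> C k" "\<And>j. \<exists>n. u j \<in> C n"
  shows "\<exists>n m. k \<le> n \<and> u m \<in> C n \<and> u (Suc m) \<in> C (Suc n) - C n"
proof -
  obtain m where m: "u m \<in> C k" "u (Suc m) \<notin> C k"
    using ex_least_nat_less[of "\<lambda>j. u j \<notin> C k" j] assms(2,3) by auto
  obtain n' where "u (Suc m) \<in> C n'" using assms(4) by blast
  then obtain n where n: "k \<le> n" "u (Suc m) \<in> C (Suc n) - C n"
    using mono_chain_entry[OF assms(1) m(2)] by blast
  moreover have "u m \<in> C n" using m(1) monoD[OF assms(1) n(1)] by blast
  ultimately show ?thesis by blast
qed

lemma chain_limit_exists:
  fixes C :: "nat \<Rightarrow> 'a set"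
  assumes "mono C" "\<And>n t. t \<in> C n \<Longrightarrow> g (Suc n) t = g n t"
  shows "\<exists>F. \<forall>n. \<forall>t\<in>C n. F t = g n t"
proof -
  have stable: "g k t = g n t" if "n \<le> k" "t \<in> C n" for n k t
    using that(1)
  proof (induction k rule: dec_induct)
    case (step k)
    then have "t \<in> C k" using that(2) monoD[OF assms(1)] by blast
    then show ?case using step.IH assms(2) by simp
  qed simp
  define F where "F t = g (LEAST n. t \<in> C n) t" for t
  have "F t = g n t" if "t \<in> C n" for n t
  proof -
    have "(LEAST n. t \<in> C n) \<le> n" "t \<in> C (LEAST n. t \<in> C n)"
      using that by (auto intro: Least_le LeastI)
    then show ?thesis using stable by (simp add: F_def)
  qed
  then show ?thesis by blast
qed

lemma chain_limit_chronological:
  fixes C :: "nat \<Rightarrow> 'a list set"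
  assumes "mono C" "\<And>n. game_emb F (C n) (A n) T2 A2"
  shows "chronological F (\<Union>n. C n) T2" and "inj_on F (\<Union>n. C n)"
proof -
  show "chronological F (\<Union>n. C n) T2"
    using assms(2) unfolding game_emb_def chronological_def by (auto simp: image_subset_iff)
  show "inj_on F (\<Union>n. C n)"
  proof (rule inj_onI)
    fix s t assume "s \<in> (\<Union>n. C n)" "t \<in> (\<Union>n. C n)" "F s = F t"
    then obtain a b where "s \<in> C a" "t \<in> C b" "F s = F t" by blast
    moreover have "C a \<subseteq> C (max a b)" "C b \<subseteq> C (max a b)"
      by (auto intro!: monoD[OF assms(1)])
    ultimately have "s \<in> C (max a b)" "t \<in> C (max a b)" "F s = F t" by blast+
    then show "s = t" using assms(2) by (auto simp: game_emb_def inj_on_def)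
  qed
qed

lemma chain_limit_escaping_run:
  fixes C :: "nat \<Rightarrow> 'a list set"
  assumes mono: "mono C" and C_Suc: "\<And>n. C (Suc n) = C n \<union> run_tree (\<rho> n)"
    and avoid: "\<And>n m. run_take (\<rho> n) m \<in> C n \<Longrightarrow> run_take (\<rho> n) (Suc m) \<notin> C n \<Longrightarrow>
      F (run_take (\<rho> n) (Suc m)) \<notin> (\<lambda>S. run_take S (Suc m)) ` a ` {..<n}"
    and chron: "chronological F (\<Union>n. C n) Y"
    and R: "R \<in> runs (\<Union>n. C n)" "\<And>n. R \<notin> runs (C n)"
  shows "fbar F R \<notin> range a"
proof
  assume "fbar F R \<in> range a"
  then obtain k where k: "fbar F R = a k" by blast
  have "run_take R 0 \<in> run_tree (\<rho> k)" by (simp add: run_tree_iff)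
  then have "run_take R 0 \<in> C (Suc k)" by (simp add: C_Suc)
  moreover obtain j where "run_take R j \<notin> C (Suc k)" using R(2) by (auto simp: runs_iff)
  moreover have "\<exists>n. run_take R j \<in> C n" for j using R(1) by (simp add: runs_iff)
  ultimately obtain n m where n: "Suc k \<le> n" and m: "run_take R m \<in> C n"
    and new: "run_take R (Suc m) \<in> C (Suc n) - C n"
    using mono_chain_first_exit[OF mono] by metis
  have "run_take R (Suc m) = run_take (\<rho> n) (Suc m)"
    using new by (auto simp: C_Suc run_tree_iff)
  moreover have "run_take R m = run_take (\<rho> n) m"
    using arg_cong[OF calculation, of "take m"] by simp
  ultimately have "F (run_take R (Suc m)) \<notin> (\<lambda>S. run_take S (Suc m)) ` a ` {..<n}"
    using avoid m new by simp
  moreover have "F (run_take R (Suc m)) = run_take (a k) (Suc m)"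
    using run_take_fbar[OF chron R(1)] k by simp
  ultimately show False using n by auto
qed

lemma game_emb_chain_limit:
  fixes C :: "nat \<Rightarrow> 'a list set"
  assumes mono: "mono C" and C_Suc: "\<And>n. C (Suc n) = C n \<union> run_tree (\<rho> n)"
    and F: "\<And>n. game_emb F (C n) (A \<inter> runs (C n)) T2 A2"
    and A: "A \<subseteq> range \<rho>" and A2: "A2 \<subseteq> range a"
    and avoid: "\<And>n m. run_take (\<rho> n) m \<in> C n \<Longrightarrow> run_take (\<rho> n) (Suc m) \<notin> C n \<Longrightarrow>
      F (run_take (\<rho> n) (Suc m)) \<notin> (\<lambda>S. run_take S (Suc m)) ` a ` {..<n}"
  shows "game_emb F (\<Union>n. C n) A T2 A2"
proof -
  note chron = chain_limit_chronological[OF mono F]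
  have "fbar F R \<in> A2 \<longleftrightarrow> R \<in> A" if R: "R \<in> runs (\<Union>n. C n)" for R
  proof (cases "\<exists>n. R \<in> runs (C n)")
    case True
    then show ?thesis using F by (auto simp: game_emb_def)
  next
    case False
    then have never: "R \<notin> runs (C n)" for n by blast
    have "R \<notin> A"
    proof
      assume "R \<in> A"
      then obtain n where "R = \<rho> n" using A by blast
      then have "R \<in> runs (C (Suc n))"
        using runs_mono[of "run_tree (\<rho> n)" "C (Suc n)"] by (simp add: C_Suc)
      then show False using never by blast
    qed
    moreover have "fbar F R \<notin> range a"
      using chain_limit_escaping_run[OF mono C_Suc avoid chron(1) R never] .
    ultimately show ?thesis using A2 by blast
  qed
  then show ?thesis using chron by (simp add: game_emb_def)
qed

lemma avoiding_extension_chain: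
  fixes T1 :: "nat list set"
  assumes inj: "injective_fin T2 A2" and even: "\<forall>x\<in>moves T1. even x"
    and T: "finite_game T (A \<inter> runs T)" "T \<subseteq> T1" and f: "game_emb f T (A \<inter> runs T) T2 A2"
    and \<rho>: "\<And>n. \<rho> n \<in> runs T1" and B: "\<And>n. finite (B n)"
  obtains C g where "C 0 = T" "g 0 = f" "\<And>n. C (Suc n) = C n \<union> run_tree (\<rho> n)"
    "\<And>n. C n \<subseteq> T1" "\<And>n. finite_game (C n) (A \<inter> runs (C n))"
    "\<And>n. game_emb (g n) (C n) (A \<inter> runs (C n)) T2 A2"
    "\<And>n t. t \<in> C n \<Longrightarrow> g (Suc n) t = g n t"
    "\<And>n m. run_take (\<rho> n) m \<in> C n \<Longrightarrow> run_take (\<rho> n) (Suc m) \<notin> C n \<Longrightarrow>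
      g (Suc n) (run_take (\<rho> n) (Suc m)) \<notin> (\<lambda>S. run_take S (Suc m)) ` B n"
proof -
  define Inv where "Inv (n::nat) x \<longleftrightarrow> (n = 0 \<longrightarrow> x = (T, f)) \<and> fst x \<subseteq> T1 \<and>
    finite_game (fst x) (A \<inter> runs (fst x)) \<and> game_emb (snd x) (fst x) (A \<inter> runs (fst x)) T2 A2"
    for n x
  define Step where "Step n x y \<longleftrightarrow> fst y = fst x \<union> run_tree (\<rho> n) \<and> (\<forall>t\<in>fst x. snd y t = snd x t) \<and>
    (\<forall>m. run_take (\<rho> n) m \<in> fst x \<longrightarrow> run_take (\<rho> n) (Suc m) \<notin> fst x \<longrightarrow>
      snd y (run_take (\<rho> n) (Suc m)) \<notin> (\<lambda>S. run_take S (Suc m)) ` B n)" for n x y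
  have "\<exists>y. Inv (Suc n) y \<and> Step n x y" if "Inv n x" for n x
  proof -
    obtain C g where x: "x = (C, g)" by fastforce
    have C: "C \<subseteq> T1" "finite_game C (A \<inter> runs C)" and g: "game_emb g C (A \<inter> runs C) T2 A2"
      using that by (simp_all add: Inv_def x)
    have "\<forall>x\<in>moves C. even x" using even moves_mono[OF C(1)] by blast
    from extend_along_run[OF inj this C(2) g B, of "\<rho> n"]
    obtain g' where g': "game_emb g' (C \<union> run_tree (\<rho> n)) (A \<inter> runs (C \<union> run_tree (\<rho> n))) T2 A2"
      "\<forall>t\<in>C. g' t = g t" "\<forall>m. run_take (\<rho> n) m \<in> C \<longrightarrow> run_take (\<rho> n) (Suc m) \<notin> C \<longrightarrow>
        g' (run_take (\<rho> n) (Suc m)) \<notin> (\<lambda>S. run_take S (Suc m)) ` B n"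
      by blast
    then have "Step n x (C \<union> run_tree (\<rho> n), g')" by (simp add: Step_def x)
    moreover have "C \<union> run_tree (\<rho> n) \<subseteq> T1" using C(1) \<rho> by (simp add: run_tree_subset_iff)
    ultimately have "Inv (Suc n) (C \<union> run_tree (\<rho> n), g')"
      using finite_game_add_run[OF C(2)] g'(1) by (simp add: Inv_def)
    with \<open>Step n x (C \<union> run_tree (\<rho> n), g')\<close> show ?thesis by blast
  qed
  moreover have "Inv 0 (T, f)" using T f by (simp add: Inv_def)
  ultimately obtain s where s: "\<And>n. Inv n (s n) \<and> Step n (s n) (s (Suc n))"
    using dependent_nat_choice[of Inv Step] by blast
  show thesis
  proof (rule that[of "fst \<circ> s" "snd \<circ> s"])
    show "(fst \<circ> s) 0 = T" "(snd \<circ> s) 0 = f" using s[of 0] by (simp_all add: Inv_def)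
  qed (use s in \<open>simp_all add: Inv_def Step_def\<close>)
qed

lemma extension_with_even_moves:
  fixes T1 :: "nat list set" and T2 :: "'b list set"
  assumes T1: "game T1 A1" and even: "\<forall>x\<in>moves T1. even x"
    and A1: "countable A1" and A2: "countable A2" and inj: "injective_fin T2 A2"
    and T: "finite_game T A" and sub: "subgame T A T1 A1" and f: "game_emb f T A T2 A2"
  shows "\<exists>F. game_emb F T1 A1 T2 A2 \<and> (\<forall>t\<in>T. F t = f t)"
proof (cases "T1 = {}")
  case True
  then show ?thesis using T1 sub f by (auto simp: subgame_def game_def)
next
  case False
  have A: "A = A1 \<inter> runs T" and "T \<subseteq> T1" using sub by (simp_all add: subgame_def)
  obtain \<rho> :: "nat \<Rightarrow> nat \<Rightarrow> nat"
    where \<rho>: "range \<rho> \<subseteq> runs T1" "A1 \<subseteq> range \<rho>" "T1 \<subseteq> (\<Union>n. run_tree (\<rho> n))"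
    using countable_game_run_cover[OF T1 countableI_type A1 False] by blast
  then have \<rho>_runs: "\<rho> n \<in> runs T1" for n by (simp add: image_subset_iff)
  obtain a :: "nat \<Rightarrow> nat \<Rightarrow> 'b" where a: "A2 \<subseteq> range a"
    using range_from_nat_into[OF _ A2] by (metis empty_subsetI order_refl)
  obtain C g where C0: "C 0 = T" and g0: "g 0 = f" and C_Suc: "\<And>n. C (Suc n) = C n \<union> run_tree (\<rho> n)"
    and C_T1: "\<And>n. C n \<subseteq> T1" and C: "\<And>n. finite_game (C n) (A1 \<inter> runs (C n))"
    and g: "\<And>n. game_emb (g n) (C n) (A1 \<inter> runs (C n)) T2 A2"
    and g_Suc: "\<And>n t. t \<in> C n \<Longrightarrow> g (Suc n) t = g n t"
    and avoid: "\<And>n m. run_take (\<rho> n) m \<in> C n \<Longrightarrow> run_take (\<rho> n) (Suc m) \<notin> C n \<Longrightarrow>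
      g (Suc n) (run_take (\<rho> n) (Suc m)) \<notin> (\<lambda>S. run_take S (Suc m)) ` a ` {..<n}"
    by (rule avoiding_extension_chain[where \<rho> = \<rho> and B = "\<lambda>n. a ` {..<n}",
        OF inj even T[unfolded A] \<open>T \<subseteq> T1\<close> f[unfolded A] \<rho>_runs finite_imageI[OF finite_lessThan]])
      (rule that)
  have mono: "mono C" by (simp add: mono_iff_le_Suc C_Suc)
  have T1_C: "(\<Union>n. C n) = T1"
  proof
    show "(\<Union>n. C n) \<subseteq> T1" using C_T1 by blast
    show "T1 \<subseteq> (\<Union>n. C n)"
    proof
      fix t assume "t \<in> T1"
      then obtain n where "t \<in> run_tree (\<rho> n)" using \<rho>(3) by blast
      then have "t \<in> C (Suc n)" by (simp add: C_Suc)
      then show "t \<in> (\<Union>n. C n)" by blast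
    qed
  qed
  obtain F where F: "\<And>n t. t \<in> C n \<Longrightarrow> F t = g n t"
    using chain_limit_exists[of C g, OF mono g_Suc] by blast
  have F_C: "game_emb F (C n) (A1 \<inter> runs (C n)) T2 A2" for n
    using game_emb_cong[OF g] C F by (simp add: finite_game_def game_def)
  have avoid_F: "F (run_take (\<rho> n) (Suc m)) \<notin> (\<lambda>S. run_take S (Suc m)) ` a ` {..<n}"
    if "run_take (\<rho> n) m \<in> C n" "run_take (\<rho> n) (Suc m) \<notin> C n" for n m
  proof -
    have "run_take (\<rho> n) (Suc m) \<in> C (Suc n)" by (simp add: C_Suc run_tree_def)
    then show ?thesis using avoid[OF that] F by simp
  qed
  have "game_emb F T1 A1 T2 A2"
    using game_emb_chain_limit[OF mono C_Suc F_C \<rho>(2) a avoid_F] by (simp add: T1_C)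
  moreover have "\<forall>t\<in>T. F t = f t" using F[of _ 0] by (simp add: C0 g0)
  ultimately show ?thesis by blast
qed

theorem mainTheorem4:
  fixes T1 :: "'a list set" and A1 :: "(nat \<Rightarrow> 'a) set"
    and T2 :: "'b list set" and A2 :: "(nat \<Rightarrow> 'b) set"
    and T :: "'a list set" and A :: "(nat \<Rightarrow> 'a) set"
    and f :: "'a list \<Rightarrow> 'b list"
  assumes "game T1 A1" and "game T2 A2"
    and "countable T1" and "countable T2" and "countable A1" and "countable A2"
    and "injective_fin T2 A2"
    and "finite_game T A" and "subgame T A T1 A1"
    and "game_emb f T A T2 A2"
  shows "\<exists>f'. game_emb f' T1 A1 T2 A2 \<and> (\<forall>t\<in>T. f' t = f t)"
proof -
  \<comment> \<open>Relabelling by even numbers yields moves in nat, as \<open>injective_fin\<close> requires,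
    and leaves the odd numbers free as fresh moves.\<close>
  define e where "e x = 2 * to_nat_on (moves T1) x" for x
  have inj_e: "inj_on e (moves T1)"
    using inj_on_to_nat_on[OF countable_moves[OF assms(3)]] by (simp add: e_def inj_on_def)
  have even: "\<forall>x\<in>moves (map e ` T1). even x" by (auto simp: moves_def e_def)
  have T: "game_tree T" "T \<subseteq> T1" "A \<subseteq> runs T"
    using assms(8,9) by (auto simp: finite_game_def game_def subgame_def)
  have inj_T: "inj_on e (moves T)" using inj_e moves_mono[OF T(2)] by (rule inj_on_subset)
  have "game_emb (f \<circ> inv_into T (map e)) (map e ` T) ((\<circ>) e ` A) T2 A2"
    using game_emb_inv_into[OF game_emb_map[OF inj_T T(3)] T(1) refl] assms(10) by (rule game_emb_comp)
  then obtain F where F: "game_emb F (map e ` T1) ((\<circ>) e ` A1) T2 A2"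
    and F_T: "\<forall>t\<in>map e ` T. F t = (f \<circ> inv_into T (map e)) t"
    using extension_with_even_moves[OF subgame_image_map(1)[OF inj_e assms(1,8,9)] even
        countable_image[OF assms(5)] assms(6,7) subgame_image_map(2,3)[OF inj_e assms(1,8,9)]]
    by blast
  have "game_emb (F \<circ> map e) T1 A1 T2 A2"
    using game_emb_map[OF inj_e] assms(1) F by (auto simp: game_def intro: game_emb_comp)
  moreover have "\<forall>t\<in>T. (F \<circ> map e) t = f t"
    using F_T inj_on_mapI[OF inj_T[unfolded moves_def]] by simp
  ultimately show ?thesis by blast
qed

end
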